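(* (1) Let $F_2$ be the free group with basis $\{a,b\}$, and consider the power series in two variables $$\Delta_{F_2}(z_1,z_2)=\sum_{g\in F_2} z_1^{|g|_{a}+|g|_{a^{-1}}}\,z_2^{|g|_{b}+|g|_{b^{-1}}},$$ where for $g\in F_2$, $|g|_{x}$ denotes the number of occurrences of the letter $x$ in the freely reduced word over $\{a,a^{-1},b,b^{-1}\}$ representing $g$. Then for every $\mathbf r=(p,q)\in M_2$ the indicatrice of growth of $\Delta_{F_2}$ is $$\psi_{F_2}(\mathbf r)=\mathbf H(\mathbf r)+p\log\!\left(2q-p+2\sqrt{p^2-pq+q^2}\right)+q\log\!\left(2p-q+2\sqrt{p^2-pq+q^2}\right),$$ where $\mathbf H(\mathbf r)=-p\log p-q\log q$ is the Shannon entropy (with $0\log 0=0$). (2) Let $L_{Fib}\subset\{a,b\}^*$ be the Fibonacci language, i.e. the set of all finite words over $\{a,b\}$ not containing $bb$ as a subword, and let $\Gamma_{Fib}(z_1,z_2)=\sum_{w\in L_{Fib}} z_1^{|w|_a}z_2^{|w|_b}$ (which equals $\frac{1+z_2}{1-z_1-z_1z_2}$). Then for $\mathbf r=(p,q)=(p,1-p)$ with $0<p<1$, the indicatrice of growth of $\Gamma_{Fib}$ is $$\psi_{Fib}(\mathbf r)=p\log\!\left(\frac{p}{p-q}\right)+q\log\!\left(\frac{p-q}{q}\right)\ \text{ if } p\ge \tfrac12,\qquad \psi_{Fib}(\mathbf r)=-\infty\ \text{ if } p<\tfrac12 .$$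
   Context: $M_d=\{\mathbf r\in\mathbb R_{\ge 0}^d:\ \|\mathbf r\|=\sum_i r_i=1\}$, where $\|\cdot\|$ is the $\ell^1$ norm on $\mathbb R^d$. For a power series $\Gamma(\mathbf z)=\sum_{\mathbf i\in\mathbb N^d} f_{\mathbf i}\mathbf z^{\mathbf i}$ with nonnegative coefficients, the indicatrice of growth is defined as follows. For an open cone $C\subset\mathbb R^d$ put $\tau_C=\limsup_{R\to\infty}\frac1R\log\Big(\sum_{\mathbf i\in C\cap\mathbb N^d,\ R\le\|\mathbf i\|\le R+1} f_{\mathbf i}\Big)$ (with $\log 0=-\infty$), and for $\mathbf r\ne 0$ put $\psi(\mathbf r)=\|\mathbf r\|\inf_{C\ni\mathbf r}\tau_C$, the infimum over open cones containing $\mathbf r$; also $\psi(\mathbf 0)=0$. $\psi_{F_2}$ and $\psi_{Fib}$ denote this function for $\Delta_{F_2}$ and $\Gamma_{Fib}$ respectively. *)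

theory Defs
  imports "HOL-Analysis.Analysis"
begin

definition M2 :: "(real \<times> real) set" where
  "M2 = {(p, q). p \<ge> 0 \<and> q \<ge> 0 \<and> p + q = 1}"

definition l1norm :: "real \<times> real \<Rightarrow> real" where
  "l1norm r = \<bar>fst r\<bar> + \<bar>snd r\<bar>"

definition open_cone :: "(real \<times> real) set \<Rightarrow> bool" where
  "open_cone C \<longleftrightarrow> open C \<and> (\<forall>x\<in>C. \<forall>t::real. t > 0 \<longrightarrow> t *\<^sub>R x \<in> C)"

definition shell :: "(real \<times> real) set \<Rightarrow> real \<Rightarrow> (nat \<times> nat) set" where
  "shell C R = {i. (real (fst i), real (snd i)) \<in> C
                   \<and> R \<le> real (fst i + snd i) \<and> real (fst i + snd i) \<le> R + 1}"

definition shell_rate :: "(nat \<times> nat \<Rightarrow> real) \<Rightarrow> (real \<times> real) set \<Rightarrow> real \<Rightarrow> ereal" where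
  "shell_rate f C R =
     (let S = (\<Sum>i\<in>shell C R. f i) in if S = 0 then -\<infinity> else ereal (ln S / R))"

definition tau :: "(nat \<times> nat \<Rightarrow> real) \<Rightarrow> (real \<times> real) set \<Rightarrow> ereal" where
  "tau f C = Limsup at_top (shell_rate f C)"

definition indicatrice :: "(nat \<times> nat \<Rightarrow> real) \<Rightarrow> real \<times> real \<Rightarrow> ereal" where
  "indicatrice f r =
     (if r = 0 then 0
      else ereal (l1norm r) * (INF C \<in> {C. open_cone C \<and> r \<in> C}. tau f C))"

datatype gen = A | B

(* letters of F_2: (generator, inverted?) ; (A,False)=a, (A,True)=a^-1, etc. *)
type_synonym letter = "gen \<times> bool"

(* freely reduced words over {a, a^-1, b, b^-1}; these are in bijection with F_2 *)
definition freely_reduced :: "letter list \<Rightarrow> bool" where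
  "freely_reduced w \<longleftrightarrow>
     (\<forall>i. Suc i < length w \<longrightarrow>
        \<not> (fst (w ! i) = fst (w ! Suc i) \<and> snd (w ! i) \<noteq> snd (w ! Suc i)))"

(* |g|_a + |g|_{a^-1}  and  |g|_b + |g|_{b^-1} *)
definition occ :: "gen \<Rightarrow> letter list \<Rightarrow> nat" where
  "occ x w = length (filter (\<lambda>l. fst l = x) w)"

definition coeff_F2 :: "nat \<times> nat \<Rightarrow> real" where
  "coeff_F2 i = real (card {w. freely_reduced w \<and> occ A w = fst i \<and> occ B w = snd i})"

definition L_Fib :: "gen list set" where
  "L_Fib = {w. \<not> (\<exists>u v. w = u @ [B, B] @ v)}"

definition count_letter :: "gen \<Rightarrow> gen list \<Rightarrow> nat" where
  "count_letter x w = length (filter (\<lambda>y. y = x) w)"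

definition coeff_Fib :: "nat \<times> nat \<Rightarrow> real" where
  "coeff_Fib i = real (card {w \<in> L_Fib. count_letter A w = fst i \<and> count_letter B w = snd i})"

definition psi_F2 :: "real \<times> real \<Rightarrow> ereal" where
  "psi_F2 = indicatrice coeff_F2"

definition psi_Fib :: "real \<times> real \<Rightarrow> ereal" where
  "psi_Fib = indicatrice coeff_Fib"

(* Shannon entropy; note ln 0 = 0 in Isabelle, so 0 * ln 0 = 0 as required *)
definition entropy2 :: "real \<times> real \<Rightarrow> real" where
  "entropy2 r = - fst r * ln (fst r) - snd r * ln (snd r)"

end

theory Submission
  imports Defs "HOL-Real_Asymp.Real_Asymp"
begin

(*
  Both indicatrices are squeezed between two bounds.  If the terms f(n,m) x^n y^m of the
  series are bounded, then in a thin cone around (p,q) the shell sums are at most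
  exp (R (- p ln x - q ln y + o(1))), so psi(p,q) <= - p ln x - q ln y.  Conversely psi(p,q)
  is at least the exponential growth rate of f along a lattice path of direction (p,q).

  The coefficients of Gamma_Fib are binomial coefficients C(n+1, m).  They vanish for
  m > n + 1, which gives -infinity when p < 1/2; for p > 1/2 the entropy estimate
  ln C(n,k) >= n H(k/n) - ln (n+1) meets the upper bound at the point x = (p-q)/p,
  y = q/(p-q) of the curve x (1 + y) = 1.

  For Delta_F2, the numbers of reduced words beginning with a given letter satisfy a linear
  recursion, which bounds the terms whenever x + y + 3xy < 1.  Conversely, reduced words with
  j + 1 blocks of each generator give coeff(n+1, m+1) >= 4^j C(n,j) C(m,j).  Taking j = tN
  for the optimal block density t, the growth rate of this lower bound equals - p ln x - q ln y
  at the point of the curve x + y + 3xy = 1 where this function is minimal, and that value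
  is the closed formula.
*)

section \<open>Exponential growth rates along lattice paths\<close>

definition growth_rate_ge :: "(nat \<Rightarrow> real) \<Rightarrow> real \<Rightarrow> bool" where
  "growth_rate_ge a L \<longleftrightarrow>
     (\<exists>g. g \<longlonglongrightarrow> L \<and> (\<forall>\<^sub>F N in sequentially. 0 < a N \<and> real N * g N \<le> ln (a N)))"

lemma nat_floor_mult_le:
  assumes "0 \<le> p" "p \<le> 1"
  shows "nat \<lfloor>p * real N\<rfloor> \<le> N"
proof -
  have "p * real N \<le> real N"
    using assms by (simp add: mult_left_le_one_le)
  then have "\<lfloor>p * real N\<rfloor> \<le> int N"
    by linarith
  then show ?thesis
    by simp
qed

lemma tendsto_nat_floor_mult_div:
  fixes c :: real
  assumes "0 \<le> c"
  shows "(\<lambda>N. real (nat \<lfloor>c * real N\<rfloor>) / real N) \<longlonglongrightarrow> c"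
proof (rule tendsto_sandwich[of "\<lambda>N. c - 1 / real N" _ _ "\<lambda>_. c"])
  show "\<forall>\<^sub>F N in sequentially. c - 1 / real N \<le> real (nat \<lfloor>c * real N\<rfloor>) / real N"
    using eventually_gt_at_top[of 0]
  proof eventually_elim
    case (elim N)
    have "c * real N - 1 \<le> real (nat \<lfloor>c * real N\<rfloor>)"
      by linarith
    then have "(c * real N - 1) / real N \<le> real (nat \<lfloor>c * real N\<rfloor>) / real N"
      by (intro divide_right_mono) auto
    then show ?case
      using elim by (simp add: diff_divide_distrib)
  qed
  show "\<forall>\<^sub>F N in sequentially. real (nat \<lfloor>c * real N\<rfloor>) / real N \<le> c"
    using eventually_gt_at_top[of 0]
  proof eventually_elim
    case (elim N)
    have "real (nat \<lfloor>c * real N\<rfloor>) \<le> c * real N"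
      using assms by simp
    then show ?case
      using elim by (simp add: divide_simps mult.commute)
  qed
  show "(\<lambda>N. c - 1 / real N) \<longlonglongrightarrow> c"
    by real_asymp
qed simp

lemma tendsto_pred_div:
  assumes "(\<lambda>N. real (n N) / real N) \<longlonglongrightarrow> p"
  shows "(\<lambda>N. real (n N - 1) / real N) \<longlonglongrightarrow> p"
proof (rule tendsto_sandwich[of "\<lambda>N. real (n N) / real N - 1 / real N" _ _ "\<lambda>N. real (n N) / real N"])
  show "\<forall>\<^sub>F N in sequentially. real (n N) / real N - 1 / real N \<le> real (n N - 1) / real N"
  proof (intro always_eventually allI)
    fix N
    have "real (n N) - 1 \<le> real (n N - 1)"
      by linarith
    then have "(real (n N) - 1) / real N \<le> real (n N - 1) / real N"
      by (rule divide_right_mono) simp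
    then show "real (n N) / real N - 1 / real N \<le> real (n N - 1) / real N"
      by (simp add: diff_divide_distrib)
  qed
  show "\<forall>\<^sub>F N in sequentially. real (n N - 1) / real N \<le> real (n N) / real N"
    by (intro always_eventually allI divide_right_mono) auto
  show "(\<lambda>N. real (n N) / real N - 1 / real N) \<longlonglongrightarrow> p"
    using tendsto_diff[OF assms lim_1_over_n] by simp
qed (rule assms)

lemma tendsto_complement_div:
  assumes n_le: "\<And>N. n N \<le> N" and n_ratio: "(\<lambda>N. real (n N) / real N) \<longlonglongrightarrow> p"
  shows "(\<lambda>N. real (N - n N) / real N) \<longlonglongrightarrow> 1 - p"
proof -
  have "\<forall>\<^sub>F N in sequentially. 1 - real (n N) / real N = real (N - n N) / real N"
    using eventually_gt_at_top[of 0] by eventually_elim (simp add: n_le of_nat_diff field_simps)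
  moreover have "(\<lambda>N. 1 - real (n N) / real N) \<longlonglongrightarrow> 1 - p"
    by (intro tendsto_intros n_ratio)
  ultimately show ?thesis
    by (rule Lim_transform_eventually[rotated])
qed

definition binomial_term :: "nat \<Rightarrow> nat \<Rightarrow> nat \<Rightarrow> nat" where
  "binomial_term N K i = (N choose i) * K ^ i * (N - K) ^ (N - i)"

lemma binomial_term_Suc:
  assumes "i < N"
  shows "binomial_term N K (Suc i) * (Suc i * (N - K)) = binomial_term N K i * ((N - i) * K)"
proof -
  have choose: "Suc i * (N choose Suc i) = (N - i) * (N choose i)"
    using binomial_absorption[of i N] binomial_absorb_comp[of N i] by simp
  have pow: "(N - K) ^ (N - i) = (N - K) ^ (N - Suc i) * (N - K)"
    using assms by (metis Suc_diff_Suc power_Suc2)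
  have "binomial_term N K (Suc i) * (Suc i * (N - K))
      = (Suc i * (N choose Suc i)) * (K ^ i * K) * ((N - K) ^ (N - Suc i) * (N - K))"
    unfolding binomial_term_def by (simp only: power_Suc2 mult_ac)
  also have "\<dots> = binomial_term N K i * ((N - i) * K)"
    unfolding binomial_term_def choose pow[symmetric] by (simp only: mult_ac)
  finally show ?thesis .
qed

lemma binomial_term_le_mode:
  assumes KN: "K \<le> N" and "i \<le> N"
  shows "binomial_term N K i \<le> binomial_term N K K"
proof (cases "i \<le> K")
  case True
  then show ?thesis
  proof (induction rule: inc_induct)
    case (step i)
    show ?case
    proof (cases "K = N")
      case True
      with step show ?thesis
        by (simp add: binomial_term_def power_0_left)
    next
      case False
      have "Suc i * (N - K) \<le> K * (N - i)"
        using step by (intro mult_le_mono) auto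
      then have "binomial_term N K i * (Suc i * (N - K)) \<le> binomial_term N K (Suc i) * (Suc i * (N - K))"
        using binomial_term_Suc[of i N K] step KN by (simp add: mult.commute[of K])
      with step False KN show ?thesis
        by simp
    qed
  qed simp
next
  case False
  then have "K \<le> i"
    by simp
  then show ?thesis
    using \<open>i \<le> N\<close>
  proof (induction rule: dec_induct)
    case (step i)
    have "(N - i) * K \<le> (N - K) * Suc i"
      using step by (intro mult_le_mono) auto
    then have "binomial_term N K (Suc i) * (Suc i * (N - K)) \<le> binomial_term N K i * (Suc i * (N - K))"
      using binomial_term_Suc[of i N K] step by (simp add: mult.commute[of "N - K"])
    with step show ?case
      by simp
  qed simp
qed

lemma binomial_mode_bound:
  assumes "K \<le> N"
  shows "N ^ N \<le> (N + 1) * binomial_term N K K"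
proof -
  have "N ^ N = (K + (N - K)) ^ N"
    using assms by simp
  also have "\<dots> = (\<Sum>i\<le>N. binomial_term N K i)"
    unfolding binomial binomial_term_def by simp
  also have "\<dots> \<le> (\<Sum>i\<le>N. binomial_term N K K)"
    using binomial_term_le_mode[OF assms] by (intro sum_mono) simp
  finally show ?thesis
    by simp
qed

lemma ln_binomial_ge_entropy:
  fixes n k :: nat
  assumes "k \<le> n"
  shows "real n * entropy2 (real k / real n, real (n - k) / real n) - ln (real n + 1)
    \<le> ln (real (n choose k))"
proof (cases "k = 0 \<or> k = n")
  case True
  then show ?thesis
    by (cases "n = 0") (auto simp: entropy2_def)
next
  case False
  with assms have k: "0 < k" "k < n" by auto
  have "real (n ^ n) \<le> real ((n + 1) * ((n choose k) * k ^ k * (n - k) ^ (n - k)))"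
    using binomial_mode_bound[OF assms] unfolding binomial_term_def by (simp only: of_nat_le_iff)
  then have "real n ^ n \<le> (real n + 1) * (real (n choose k) * real k ^ k * real (n - k) ^ (n - k))"
    by (simp add: distrib_right)
  then have "ln (real n ^ n)
      \<le> ln ((real n + 1) * (real (n choose k) * real k ^ k * real (n - k) ^ (n - k)))"
    using k by (subst ln_le_cancel_iff) (auto simp: zero_less_binomial)
  then have "real n * ln (real n)
      \<le> ln (real n + 1) + ln (real (n choose k)) + real k * ln (real k) + real (n - k) * ln (real (n - k))"
    using k by (simp add: ln_mult ln_realpow zero_less_binomial)
  moreover have "real n * entropy2 (real k / real n, real (n - k) / real n)
      = - real k * ln (real k / real n) - real (n - k) * ln (real (n - k) / real n)"
    using k by (simp add: entropy2_def field_simps)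
  moreover have "\<dots> = real n * ln (real n) - real k * ln (real k) - real (n - k) * ln (real (n - k))"
    using k by (simp add: ln_div of_nat_diff algebra_simps)
  ultimately show ?thesis by linarith
qed

lemma growth_rate_ge_mono:
  assumes "growth_rate_ge a L" and "\<forall>\<^sub>F N in sequentially. a N \<le> b N"
  shows "growth_rate_ge b L"
proof -
  obtain g where "g \<longlonglongrightarrow> L" and "\<forall>\<^sub>F N in sequentially. 0 < a N \<and> real N * g N \<le> ln (a N)"
    using assms(1) unfolding growth_rate_ge_def by blast
  from this(2) assms(2) have "\<forall>\<^sub>F N in sequentially. 0 < b N \<and> real N * g N \<le> ln (b N)"
    by eventually_elim (smt (verit) ln_le_cancel_iff)
  with \<open>g \<longlonglongrightarrow> L\<close> show ?thesis
    unfolding growth_rate_ge_def by blast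
qed

lemma growth_rate_ge_mult:
  assumes "growth_rate_ge a L" and "growth_rate_ge b M"
  shows "growth_rate_ge (\<lambda>N. a N * b N) (L + M)"
proof -
  obtain g where "g \<longlonglongrightarrow> L" and g: "\<forall>\<^sub>F N in sequentially. 0 < a N \<and> real N * g N \<le> ln (a N)"
    using assms(1) unfolding growth_rate_ge_def by blast
  obtain h where "h \<longlonglongrightarrow> M" and h: "\<forall>\<^sub>F N in sequentially. 0 < b N \<and> real N * h N \<le> ln (b N)"
    using assms(2) unfolding growth_rate_ge_def by blast
  from g h have "\<forall>\<^sub>F N in sequentially.
      0 < a N * b N \<and> real N * (g N + h N) \<le> ln (a N * b N)"
    by eventually_elim (simp add: ln_mult distrib_left add_mono)
  moreover have "(\<lambda>N. g N + h N) \<longlonglongrightarrow> L + M"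
    using \<open>g \<longlonglongrightarrow> L\<close> \<open>h \<longlonglongrightarrow> M\<close> by (rule tendsto_add)
  ultimately show ?thesis
    unfolding growth_rate_ge_def by blast
qed

lemma growth_rate_ge_zero:
  assumes "\<forall>\<^sub>F N in sequentially. 1 \<le> a N"
  shows "growth_rate_ge a 0"
  unfolding growth_rate_ge_def
  using assms by (intro exI[of _ "\<lambda>_. 0"]) (auto elim: eventually_mono)

lemma growth_rate_ge_power:
  assumes k: "(\<lambda>N. real (k N) / real N) \<longlonglongrightarrow> t" and c: "0 < c"
  shows "growth_rate_ge (\<lambda>N. c ^ k N) (t * ln c)"
  unfolding growth_rate_ge_def
proof (intro exI conjI)
  show "(\<lambda>N. real (k N) / real N * ln c) \<longlonglongrightarrow> t * ln c"
    using k by (rule tendsto_mult_right)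
  show "\<forall>\<^sub>F N in sequentially. 0 < c ^ k N \<and> real N * (real (k N) / real N * ln c) \<le> ln (c ^ k N)"
    using eventually_gt_at_top[of 0] by eventually_elim (simp add: c ln_realpow)
qed

lemma tendsto_ratio_div:
  assumes k: "(\<lambda>N. real (k N) / real N) \<longlonglongrightarrow> a" and n: "(\<lambda>N. real (n N) / real N) \<longlonglongrightarrow> b"
    and "b \<noteq> 0"
  shows "(\<lambda>N. real (k N) / real (n N)) \<longlonglongrightarrow> a / b"
proof -
  have "\<forall>\<^sub>F N in sequentially. (real (k N) / real N) / (real (n N) / real N) = real (k N) / real (n N)"
    using eventually_gt_at_top[of 0] by eventually_elim simp
  moreover have "(\<lambda>N. (real (k N) / real N) / (real (n N) / real N)) \<longlonglongrightarrow> a / b"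
    using assms by (intro tendsto_divide)
  ultimately show ?thesis
    by (rule Lim_transform_eventually[rotated])
qed

lemma tendsto_ln_Suc_div:
  assumes n: "(\<lambda>N. real (n N) / real N) \<longlonglongrightarrow> b" and "0 < b"
  shows "(\<lambda>N. ln (real (n N) + 1) / real N) \<longlonglongrightarrow> 0"
proof -
  have "\<forall>\<^sub>F N in sequentially.
      ln ((real (n N) + 1) / real N) * (1 / real N) + ln (real N) / real N = ln (real (n N) + 1) / real N"
    using eventually_gt_at_top[of 0]
    by eventually_elim (simp add: ln_div add_pos_nonneg diff_divide_distrib)
  moreover have "(\<lambda>N. (real (n N) + 1) / real N) \<longlonglongrightarrow> b"
    using tendsto_add[OF n lim_inverse_n'] by (simp add: add_divide_distrib)
  moreover have "(\<lambda>N. ln (real N) / real N) \<longlonglongrightarrow> 0"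
    by real_asymp
  ultimately have "(\<lambda>N. ln ((real (n N) + 1) / real N) * (1 / real N) + ln (real N) / real N)
      \<longlonglongrightarrow> ln b * 0 + 0"
    using \<open>0 < b\<close> by (intro tendsto_add tendsto_mult tendsto_ln lim_1_over_n) auto
  with \<open>\<forall>\<^sub>F N in sequentially. _ = _\<close> show ?thesis
    by (auto intro: Lim_transform_eventually[rotated])
qed

lemma growth_rate_ge_binomial:
  assumes k: "(\<lambda>N. real (k N) / real N) \<longlonglongrightarrow> a" and n: "(\<lambda>N. real (n N) / real N) \<longlonglongrightarrow> b"
    and a: "0 < a" "a < b"
  shows "growth_rate_ge (\<lambda>N. real (n N choose k N)) (b * entropy2 (a / b, 1 - a / b))"
  unfolding growth_rate_ge_def
proof (intro exI conjI)
  have u: "(\<lambda>N. real (k N) / real (n N)) \<longlonglongrightarrow> a / b"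
    using k n a by (intro tendsto_ratio_div) auto
  moreover have v: "(\<lambda>N. 1 - real (k N) / real (n N)) \<longlonglongrightarrow> 1 - a / b"
    using u by (rule tendsto_diff[OF tendsto_const])
  moreover have "a / b \<noteq> 0" "1 - a / b \<noteq> 0"
    using a by auto
  ultimately have "(\<lambda>N. real (n N) / real N * entropy2 (real (k N) / real (n N), 1 - real (k N) / real (n N))
      - ln (real (n N) + 1) / real N) \<longlonglongrightarrow> b * entropy2 (a / b, 1 - a / b) - 0"
    unfolding entropy2_def fst_conv snd_conv using a
    by (intro tendsto_diff tendsto_mult n tendsto_minus tendsto_ln tendsto_ln_Suc_div[OF n]) auto
  then show "(\<lambda>N. real (n N) / real N * entropy2 (real (k N) / real (n N), 1 - real (k N) / real (n N))
      - ln (real (n N) + 1) / real N) \<longlonglongrightarrow> b * entropy2 (a / b, 1 - a / b)"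
    by simp
  have "(\<lambda>N. real (n N) / real N - real (k N) / real N) \<longlonglongrightarrow> b - a"
    using n k by (rule tendsto_diff)
  then have "\<forall>\<^sub>F N in sequentially. 0 < real (n N) / real N - real (k N) / real N"
    using a(2) by (intro order_tendstoD(1)) auto
  then show "\<forall>\<^sub>F N in sequentially. 0 < real (n N choose k N) \<and>
      real N * (real (n N) / real N * entropy2 (real (k N) / real (n N), 1 - real (k N) / real (n N))
        - ln (real (n N) + 1) / real N) \<le> ln (real (n N choose k N))"
    using eventually_gt_at_top[of 0]
  proof eventually_elim
    case (elim N)
    then have "k N < n N"
      by (simp add: diff_divide_distrib[symmetric] zero_less_divide_iff)
    then have "real (n N - k N) / real (n N) = 1 - real (k N) / real (n N)"
      by (simp add: of_nat_diff diff_divide_distrib)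
    then show ?case
      using ln_binomial_ge_entropy[of "k N" "n N"] elim \<open>k N < n N\<close>
      by (simp add: right_diff_distrib)
  qed
qed

section \<open>Indicatrice of growth from two-sided bounds\<close>

lemma shell_subset: "0 \<le> R \<Longrightarrow> shell C R \<subseteq> {..nat \<lfloor>R + 1\<rfloor>} \<times> {..nat \<lfloor>R + 1\<rfloor>}"
proof
  fix i assume "i \<in> shell C R"
  then have "real (fst i) \<le> R + 1" "real (snd i) \<le> R + 1"
    by (auto simp: shell_def)
  then have "int (fst i) \<le> \<lfloor>R + 1\<rfloor>" "int (snd i) \<le> \<lfloor>R + 1\<rfloor>"
    by (subst le_floor_iff, simp)+
  then show "i \<in> {..nat \<lfloor>R + 1\<rfloor>} \<times> {..nat \<lfloor>R + 1\<rfloor>}"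
    by (cases i) auto
qed

lemma finite_shell: "0 \<le> R \<Longrightarrow> finite (shell C R)"
  using shell_subset by (meson finite_SigmaI finite_atMost finite_subset)

lemma card_shell_le:
  assumes "0 \<le> R"
  shows "real (card (shell C R)) \<le> (R + 2)\<^sup>2"
proof -
  have "card (shell C R) \<le> card ({..nat \<lfloor>R + 1\<rfloor>} \<times> {..nat \<lfloor>R + 1\<rfloor>})"
    using shell_subset[OF assms] by (intro card_mono) auto
  also have "\<dots> = (nat \<lfloor>R + 1\<rfloor> + 1)\<^sup>2"
    by (simp add: card_cartesian_product power2_eq_square)
  finally have "real (card (shell C R)) \<le> (real (nat \<lfloor>R + 1\<rfloor>) + 1)\<^sup>2"
    by (metis of_nat_1 of_nat_add of_nat_le_iff of_nat_power)
  also have "\<dots> \<le> (R + 2)\<^sup>2"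
    using assms by (intro power_mono) linarith+
  finally show ?thesis .
qed

lemma open_cone_halfplane: "open_cone {z. a * fst z + b * snd z < (0::real)}"
  unfolding open_cone_def
proof (intro conjI ballI allI impI)
  show "open {z. a * fst z + b * snd z < (0::real)}"
    by (rule open_Collect_less) (intro continuous_intros)+
  fix z :: "real \<times> real" and t :: real
  assume "z \<in> {z. a * fst z + b * snd z < 0}" and "0 < t"
  then have "t * (a * fst z + b * snd z) < 0" by (simp add: mult_pos_neg)
  then show "t *\<^sub>R z \<in> {z. a * fst z + b * snd z < 0}" by (simp add: algebra_simps)
qed

lemma tau_le_of_shell_bound:
  fixes f :: "nat \<times> nat \<Rightarrow> real"
  assumes f_nonneg: "\<And>i. 0 \<le> f i" and c: "0 < c"
    and bound: "\<And>R i. 1 \<le> R \<Longrightarrow> i \<in> shell C R \<Longrightarrow> f i \<le> c * exp (K * R)"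
  shows "tau f C \<le> ereal K"
proof -
  define h where "h R = (2 * ln (R + 2) + ln c) / R + K" for R :: real
  have "shell_rate f C R \<le> ereal (h R)" if R: "1 \<le> R" for R
  proof (cases "(\<Sum>i\<in>shell C R. f i) = 0")
    case True
    then show ?thesis by (simp add: shell_rate_def)
  next
    case False
    define S where "S = (\<Sum>i\<in>shell C R. f i)"
    have "0 < S"
      using False f_nonneg sum_nonneg[of "shell C R" f] unfolding S_def by (simp add: less_le)
    have "S \<le> real (card (shell C R)) * (c * exp (K * R))"
      unfolding S_def using bound[OF R] by (rule sum_bounded_above)
    also have "\<dots> \<le> (R + 2)\<^sup>2 * (c * exp (K * R))"
      using card_shell_le[of R C] R c by (intro mult_right_mono) auto
    finally have "ln S \<le> ln ((R + 2)\<^sup>2 * (c * exp (K * R)))"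
      using \<open>0 < S\<close> by simp
    also have "\<dots> = 2 * ln (R + 2) + ln c + K * R"
      using R c by (simp add: ln_mult ln_realpow)
    finally have "ln S / R \<le> h R"
      using R by (simp add: h_def divide_simps mult.commute)
    then show ?thesis
      using False by (simp add: shell_rate_def S_def)
  qed
  then have "\<forall>\<^sub>F R in at_top. shell_rate f C R \<le> ereal (h R)"
    using eventually_ge_at_top by (rule eventually_mono[rotated]) auto
  then have "tau f C \<le> Limsup at_top (\<lambda>R. ereal (h R))"
    unfolding tau_def by (rule Limsup_mono)
  moreover have "(h \<longlongrightarrow> K) at_top"
    unfolding h_def by real_asymp
  then have "Limsup at_top (\<lambda>R. ereal (h R)) = ereal K"
    by (intro lim_imp_Limsup) (auto intro: tendsto_ereal)
  ultimately show ?thesis by simp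
qed

definition bounded_terms :: "(nat \<times> nat \<Rightarrow> real) \<Rightarrow> real \<Rightarrow> real \<Rightarrow> bool" where
  "bounded_terms f x y \<longleftrightarrow> (\<exists>c. \<forall>n m. f (n, m) * x ^ n * y ^ m \<le> c)"

lemma bounded_terms_le_exp:
  fixes f :: "nat \<times> nat \<Rightarrow> real"
  assumes x: "0 < x" and y: "0 < y" and bounded: "bounded_terms f x y"
  obtains c where "0 < c" "\<And>n m. f (n, m) \<le> c * exp (- real n * ln x - real m * ln y)"
proof -
  obtain c where c: "\<And>n m. f (n, m) * x ^ n * y ^ m \<le> c"
    using bounded unfolding bounded_terms_def by blast
  have "f (n, m) \<le> max c 1 * exp (- real n * ln x - real m * ln y)" for n m
  proof -
    have "x ^ n * y ^ m = exp (real n * ln x + real m * ln y)"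
      using x y by (simp add: exp_add exp_of_nat_mult)
    moreover have "f (n, m) * (x ^ n * y ^ m) \<le> max c 1"
      using c[of n m] by (simp add: mult.assoc)
    ultimately have "f (n, m) \<le> max c 1 / exp (real n * ln x + real m * ln y)"
      by (simp add: pos_le_divide_eq)
    also have "\<dots> = max c 1 * exp (- real n * ln x - real m * ln y)"
      by (simp add: exp_minus[symmetric] divide_inverse)
    finally show ?thesis .
  qed
  then show ?thesis
    using that[of "max c 1"] by simp
qed

lemma tau_upper_bound:
  fixes f :: "nat \<times> nat \<Rightarrow> real"
  assumes f_nonneg: "\<And>i. 0 \<le> f i" and x: "0 < x" and y: "0 < y"
    and bounded: "bounded_terms f x y" and pq: "p + q = 1" and K: "- p * ln x - q * ln y < K"
  obtains C where "open_cone C" "(p, q) \<in> C" "tau f C \<le> ereal K"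
proof
  obtain c where c: "0 < c" and term_bound: "\<And>n m. f (n, m) \<le> c * exp (- real n * ln x - real m * ln y)"
    using bounded_terms_le_exp[OF x y bounded] by blast
  define C where "C = {z. (- ln x - K) * fst z + (- ln y - K) * snd z < 0}"
  show "open_cone C"
    unfolding C_def by (rule open_cone_halfplane)
  have "(- ln x - K) * p + (- ln y - K) * q = - p * ln x - q * ln y - K * (p + q)"
    by (simp add: algebra_simps)
  then show "(p, q) \<in> C"
    using K pq by (simp add: C_def)
  show "tau f C \<le> ereal K"
  proof (rule tau_le_of_shell_bound[OF f_nonneg])
    show "0 < c * exp \<bar>K\<bar>"
      using c by simp
    fix R i assume "1 \<le> R" and i: "i \<in> shell C R"
    obtain n m where nm: "i = (n, m)"
      by force
    have "- real n * ln x - real m * ln y < K * real (n + m)"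
      and "R \<le> real (n + m)" "real (n + m) \<le> R + 1"
      using i by (auto simp: nm shell_def C_def algebra_simps)
    moreover have "\<bar>K * (real (n + m) - R)\<bar> \<le> \<bar>K\<bar> * 1"
      unfolding abs_mult using \<open>R \<le> real (n + m)\<close> \<open>real (n + m) \<le> R + 1\<close>
      by (intro mult_left_mono) auto
    then have "K * real (n + m) \<le> K * R + \<bar>K\<bar>"
      by (simp add: right_diff_distrib)
    ultimately have "exp (- real n * ln x - real m * ln y) \<le> exp (K * R + \<bar>K\<bar>)"
      by simp
    then have "f i \<le> c * exp (K * R + \<bar>K\<bar>)"
      using term_bound[of n m] c unfolding nm by (meson mult_left_mono less_imp_le order.trans)
    then show "f i \<le> c * exp \<bar>K\<bar> * exp (K * R)"
      by (simp add: exp_add mult_ac)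
  qed
qed

lemma filterlim_nat_ceiling: "filterlim (\<lambda>R::real. nat \<lceil>R\<rceil>) sequentially at_top"
  unfolding filterlim_at_top
proof
  fix Z :: nat
  show "\<forall>\<^sub>F R::real in at_top. Z \<le> nat \<lceil>R\<rceil>"
    using eventually_ge_at_top[of "real Z"] by eventually_elim linarith
qed

lemma tendsto_nat_ceiling_div: "((\<lambda>R::real. real (nat \<lceil>R\<rceil>) / R) \<longlongrightarrow> 1) at_top"
proof (rule tendsto_sandwich[of "\<lambda>_. 1" _ _ "\<lambda>R. 1 + 1 / R"])
  show "\<forall>\<^sub>F R in at_top. 1 \<le> real (nat \<lceil>R\<rceil>) / R"
    using eventually_gt_at_top[of 0]
  proof eventually_elim
    case (elim R)
    have "R \<le> real (nat \<lceil>R\<rceil>)" by linarith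
    then show ?case using elim by simp
  qed
  show "\<forall>\<^sub>F R in at_top. real (nat \<lceil>R\<rceil>) / R \<le> 1 + 1 / R"
    using eventually_gt_at_top[of 0]
  proof eventually_elim
    case (elim R)
    have "real (nat \<lceil>R\<rceil>) \<le> R + 1" using elim by linarith
    then have "real (nat \<lceil>R\<rceil>) / R \<le> (R + 1) / R"
      using elim by (intro divide_right_mono) auto
    then show ?case using elim by (simp add: add_divide_distrib)
  qed
  show "((\<lambda>R::real. 1 + 1 / R) \<longlongrightarrow> 1) at_top"
    by real_asymp
qed simp

lemma eventually_path_in_cone:
  assumes C: "open_cone C" "(p, q) \<in> C" and pq: "p + q = 1"
    and n_le: "\<And>N. n N \<le> N" and n_ratio: "(\<lambda>N. real (n N) / real N) \<longlonglongrightarrow> p"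
  shows "\<forall>\<^sub>F N in sequentially. (real (n N), real (N - n N)) \<in> C"
proof -
  have "1 - p = q"
    using pq by simp
  then have "(\<lambda>N. real (N - n N) / real N) \<longlonglongrightarrow> q"
    using tendsto_complement_div[OF n_le n_ratio] by simp
  with n_ratio have "(\<lambda>N. (real (n N) / real N, real (N - n N) / real N)) \<longlonglongrightarrow> (p, q)"
    by (rule tendsto_Pair)
  then have "\<forall>\<^sub>F N in sequentially. (real (n N) / real N, real (N - n N) / real N) \<in> C"
    using C by (intro topological_tendstoD) (auto simp: open_cone_def)
  then show ?thesis
    using eventually_gt_at_top[of 0]
  proof eventually_elim
    case (elim N)
    then have "real N *\<^sub>R (real (n N) / real N, real (N - n N) / real N) \<in> C"
      using C(1) unfolding open_cone_def by (meson of_nat_0_less_iff)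
    then show ?case
      using elim by simp
  qed
qed

lemma shell_rate_ge_term:
  fixes f :: "nat \<times> nat \<Rightarrow> real"
  assumes f_nonneg: "\<And>i. 0 \<le> f i" and R: "0 < R" and i: "i \<in> shell C R" and pos: "0 < f i"
  shows "ereal (ln (f i) / R) \<le> shell_rate f C R"
proof -
  have "f i \<le> (\<Sum>j\<in>shell C R. f j)"
    using R i f_nonneg finite_shell by (intro member_le_sum) auto
  with pos have "0 < (\<Sum>j\<in>shell C R. f j)" "ln (f i) \<le> ln (\<Sum>j\<in>shell C R. f j)"
    by auto
  with R show ?thesis
    by (simp add: shell_rate_def divide_right_mono)
qed

lemma tau_lower_bound:
  fixes f :: "nat \<times> nat \<Rightarrow> real"
  assumes f_nonneg: "\<And>i. 0 \<le> f i" and C: "open_cone C" "(p, q) \<in> C" and pq: "p + q = 1"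
    and n_le: "\<And>N. n N \<le> N" and n_ratio: "(\<lambda>N. real (n N) / real N) \<longlonglongrightarrow> p"
    and growth: "growth_rate_ge (\<lambda>N. f (n N, N - n N)) L"
  shows "ereal L \<le> tau f C"
proof -
  obtain g where g: "g \<longlonglongrightarrow> L"
    and ev: "\<forall>\<^sub>F N in sequentially. 0 < f (n N, N - n N) \<and> real N * g N \<le> ln (f (n N, N - n N))"
    using growth unfolding growth_rate_ge_def by blast
  have "\<forall>\<^sub>F N in sequentially. (real (n N), real (N - n N)) \<in> C
      \<and> 0 < f (n N, N - n N) \<and> real N * g N \<le> ln (f (n N, N - n N))"
    using ev eventually_path_in_cone[OF C pq n_le n_ratio] by eventually_elim auto
  then obtain N0 where N0: "\<And>N. N0 \<le> N \<Longrightarrow> (real (n N), real (N - n N)) \<in> C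
      \<and> 0 < f (n N, N - n N) \<and> real N * g N \<le> ln (f (n N, N - n N))"
    unfolding eventually_sequentially by blast
  define h where "h R = real (nat \<lceil>R\<rceil>) / R * g (nat \<lceil>R\<rceil>)" for R
  have h_le: "ereal (h R) \<le> shell_rate f C R" if R: "real N0 \<le> R" "0 < R" for R
  proof -
    define N where "N = nat \<lceil>R\<rceil>"
    have "N0 \<le> N" "R \<le> real N" "real N \<le> R + 1"
      using R unfolding N_def by linarith+
    with N0 have "(n N, N - n N) \<in> shell C R" "0 < f (n N, N - n N)"
      and "h R \<le> ln (f (n N, N - n N)) / R"
      using R by (auto simp: shell_def n_le h_def N_def[symmetric] field_simps)
    with shell_rate_ge_term[OF f_nonneg \<open>0 < R\<close>] show ?thesis
      by (meson ereal_less_eq(3) order_trans)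
  qed
  have "\<forall>\<^sub>F R in at_top. ereal (h R) \<le> shell_rate f C R"
    using eventually_ge_at_top[of "real N0"] eventually_gt_at_top[of 0]
    by eventually_elim (rule h_le)
  then have "Limsup at_top (\<lambda>R. ereal (h R)) \<le> tau f C"
    unfolding tau_def by (rule Limsup_mono)
  moreover have "(h \<longlongrightarrow> 1 * L) at_top"
    unfolding h_def
    by (intro tendsto_mult tendsto_nat_ceiling_div filterlim_compose[OF g filterlim_nat_ceiling])
  then have "Limsup at_top (\<lambda>R. ereal (h R)) = ereal L"
    by (intro lim_imp_Limsup) (auto intro: tendsto_ereal)
  ultimately show ?thesis by simp
qed

lemma indicatrice_eq_INF_tau:
  assumes "(p, q) \<in> M2"
  shows "indicatrice f (p, q) = (INF C \<in> {C. open_cone C \<and> (p, q) \<in> C}. tau f C)"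
proof -
  have "l1norm (p, q) = 1" "(p, q) \<noteq> 0"
    using assms by (auto simp: M2_def l1norm_def zero_prod_def)
  then show ?thesis
    by (simp add: indicatrice_def one_ereal_def[symmetric])
qed

lemma indicatrice_eqI:
  fixes f :: "nat \<times> nat \<Rightarrow> real"
  assumes M2: "(p, q) \<in> M2" and f_nonneg: "\<And>i. 0 \<le> f i"
    and n_le: "\<And>N. n N \<le> N" and n_ratio: "(\<lambda>N. real (n N) / real N) \<longlonglongrightarrow> p"
    and growth: "growth_rate_ge (\<lambda>N. f (n N, N - n N)) L"
    and convergence: "\<And>e. 0 < e \<Longrightarrow>
      \<exists>x y. 0 < x \<and> 0 < y \<and> bounded_terms f x y \<and> - p * ln x - q * ln y < L + e"
  shows "indicatrice f (p, q) = ereal L"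
proof -
  have pq: "p + q = 1"
    using M2 by (simp add: M2_def)
  let ?I = "INF C \<in> {C. open_cone C \<and> (p, q) \<in> C}. tau f C"
  have "ereal L \<le> ?I"
  proof (rule INF_greatest)
    fix C assume "C \<in> {C. open_cone C \<and> (p, q) \<in> C}"
    then show "ereal L \<le> tau f C"
      using tau_lower_bound[OF f_nonneg _ _ pq n_le n_ratio growth] by blast
  qed
  moreover have "?I \<le> ereal L"
  proof (rule ereal_le_epsilon2)
    fix e :: real assume "0 < e"
    then obtain x y where xy: "0 < x" "0 < y" "bounded_terms f x y"
      and lt: "- p * ln x - q * ln y < L + e"
      using convergence by blast
    obtain C where C: "open_cone C" "(p, q) \<in> C" "tau f C \<le> ereal (L + e)"
      using tau_upper_bound[OF f_nonneg xy pq lt] .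
    then have "?I \<le> tau f C"
      by (intro INF_lower) simp
    then show "?I \<le> ereal L + ereal e"
      using C(3) by simp
  qed
  ultimately show ?thesis
    using indicatrice_eq_INF_tau[OF M2] by simp
qed

lemma indicatrice_eq_minf:
  assumes M2: "(p, q) \<in> M2" and C: "open_cone C" "(p, q) \<in> C"
    and vanish: "\<forall>\<^sub>F R in at_top. \<forall>i\<in>shell C R. f i = 0"
  shows "indicatrice f (p, q) = -\<infinity>"
proof -
  have "\<forall>\<^sub>F R in at_top. shell_rate f C R = -\<infinity>"
    using vanish by eventually_elim (simp add: shell_rate_def)
  then have "tau f C = -\<infinity>"
    unfolding tau_def by (intro lim_imp_Limsup tendsto_eventually) simp_all
  moreover have "(INF C \<in> {C. open_cone C \<and> (p, q) \<in> C}. tau f C) \<le> tau f C"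
    using C by (intro INF_lower) auto
  ultimately show ?thesis
    using indicatrice_eq_INF_tau[OF M2] by simp
qed

section \<open>The Fibonacci language\<close>

lemma UNIV_gen: "(UNIV :: gen set) = {A, B}"
  using gen.exhaust by auto

lemma gen_neq_iff [simp]: "x \<noteq> A \<longleftrightarrow> x = B" "x \<noteq> B \<longleftrightarrow> x = A"
  by (cases x; simp)+

lemma Cons_in_Cons_image [simp]: "x # w \<in> Cons y ` S \<longleftrightarrow> x = y \<and> w \<in> S"
  by auto

lemma L_Fib_Nil [simp]: "[] \<in> L_Fib"
  by (simp add: L_Fib_def)

lemma L_Fib_Cons: "x # w \<in> L_Fib \<longleftrightarrow> w \<in> L_Fib \<and> \<not> (x = B \<and> w \<noteq> [] \<and> hd w = B)"
proof
  assume xw: "x # w \<in> L_Fib"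
  have "w \<in> L_Fib"
  proof (rule ccontr)
    assume "w \<notin> L_Fib"
    then obtain u v where "w = u @ [B, B] @ v"
      by (auto simp: L_Fib_def)
    then have "x # w = (x # u) @ [B, B] @ v"
      by simp
    with xw show False
      unfolding L_Fib_def by blast
  qed
  moreover have "\<not> (x = B \<and> w \<noteq> [] \<and> hd w = B)"
  proof
    assume "x = B \<and> w \<noteq> [] \<and> hd w = B"
    then have "x # w = [] @ [B, B] @ tl w"
      by (cases w) auto
    with xw show False
      unfolding L_Fib_def by blast
  qed
  ultimately show "w \<in> L_Fib \<and> \<not> (x = B \<and> w \<noteq> [] \<and> hd w = B)" ..
next
  assume w: "w \<in> L_Fib \<and> \<not> (x = B \<and> w \<noteq> [] \<and> hd w = B)"
  show "x # w \<in> L_Fib"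
  proof (rule ccontr)
    assume "x # w \<notin> L_Fib"
    then obtain u v where uv: "x # w = u @ [B, B] @ v"
      by (auto simp: L_Fib_def)
    show False
    proof (cases u)
      case Nil
      with uv w show False by auto
    next
      case (Cons y u')
      with uv have "w = u' @ [B, B] @ v" by simp
      with w show False
        unfolding L_Fib_def by blast
    qed
  qed
qed

lemma count_letter_simps [simp]:
  "count_letter x [] = 0"
  "count_letter x (y # w) = (if y = x then Suc (count_letter x w) else count_letter x w)"
  by (simp_all add: count_letter_def)

lemma length_eq_count_letter: "length w = count_letter A w + count_letter B w"
  by (induction w) auto

definition fib_words :: "nat \<Rightarrow> nat \<Rightarrow> gen list set" where
  "fib_words n m = {w \<in> L_Fib. count_letter A w = n \<and> count_letter B w = m}"

lemma finite_fib_words: "finite (fib_words n m)"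
proof (rule finite_subset)
  show "fib_words n m \<subseteq> {w. set w \<subseteq> UNIV \<and> length w = n + m}"
    by (auto simp: fib_words_def length_eq_count_letter)
  show "finite {w. set w \<subseteq> (UNIV :: gen set) \<and> length w = n + m}"
    by (rule finite_lists_length_eq) (simp add: UNIV_gen)
qed

lemma fib_words_0: "fib_words 0 m = (if m = 0 then {[]} else if m = 1 then {[B]} else {})"
proof -
  have "w \<in> fib_words 0 m \<longleftrightarrow> w = [] \<and> m = 0 \<or> w = [B] \<and> m = 1" for w
    by (cases w rule: remdups_adj.cases) (auto simp: fib_words_def L_Fib_Cons split: if_splits)
  then show ?thesis
    by auto
qed

lemma fib_words_Suc:
  "fib_words (Suc n) m =
     Cons A ` fib_words n m \<union> (if m = 0 then {} else Cons B ` Cons A ` fib_words n (m - 1))"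
proof -
  have "w \<in> fib_words (Suc n) m \<longleftrightarrow>
      (\<exists>w'. w = A # w' \<and> w' \<in> fib_words n m) \<or> (\<exists>w'. 0 < m \<and> w = B # A # w' \<and> w' \<in> fib_words n (m - 1))"
    for w
    by (cases w rule: remdups_adj.cases) (auto simp: fib_words_def L_Fib_Cons split: if_splits)
  then show ?thesis
    by auto
qed

lemma card_fib_words: "card (fib_words n m) = Suc n choose m"
proof (induction n arbitrary: m)
  case 0
  then show ?case
    by (simp add: fib_words_0 binomial_eq_0)
next
  case (Suc n)
  have "card (fib_words (Suc n) m)
      = card (fib_words n m) + (if m = 0 then 0 else card (fib_words n (m - 1)))"
    unfolding fib_words_Suc
    by (subst card_Un_disjoint) (auto simp: finite_fib_words card_image)
  then show ?case
    using Suc.IH by (cases m) simp_all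
qed

lemma coeff_Fib_eq: "coeff_Fib (n, m) = real (Suc n choose m)"
  using card_fib_words[of n m] by (simp add: coeff_Fib_def fib_words_def)

lemma bounded_terms_coeff_Fib:
  fixes x y :: real
  assumes x: "0 < x" and y: "0 < y" and xy: "x * (1 + y) \<le> 1"
  shows "bounded_terms coeff_Fib x y"
  unfolding bounded_terms_def
proof (intro exI allI)
  fix n m
  have "real (Suc n choose m) * y ^ m \<le> (1 + y) ^ Suc n"
  proof (cases "m \<le> Suc n")
    case True
    have "real (Suc n choose m) * y ^ m \<le> (\<Sum>k\<le>Suc n. real (Suc n choose k) * y ^ k)"
      using True y by (intro member_le_sum) auto
    also have "\<dots> = (1 + y) ^ Suc n"
      using binomial_ring[of y 1 "Suc n"] by (simp add: add.commute)
    finally show ?thesis .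
  qed (use y in \<open>simp add: binomial_eq_0 zero_le_mult_iff\<close>)
  then have "coeff_Fib (n, m) * x ^ n * y ^ m \<le> (1 + y) ^ Suc n * x ^ n"
    using x by (simp add: coeff_Fib_eq mult_right_mono mult_ac)
  also have "\<dots> = (1 + y) * (x * (1 + y)) ^ n"
    by (simp add: power_mult_distrib mult_ac)
  also have "\<dots> \<le> 1 + y"
    using x y xy by (simp add: power_le_one mult_left_le)
  finally show "coeff_Fib (n, m) * x ^ n * y ^ m \<le> 1 + y" .
qed

lemma coeff_Fib_nonneg: "0 \<le> coeff_Fib i"
  by (simp add: coeff_Fib_def)

lemma growth_rate_ge_coeff_Fib:
  fixes p q :: real
  assumes n_le: "\<And>N. n N \<le> N" and n_ratio: "(\<lambda>N. real (n N) / real N) \<longlonglongrightarrow> p"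
    and pq: "p + q = 1" and q: "0 < q" "q < p"
  shows "growth_rate_ge (\<lambda>N. coeff_Fib (n N, N - n N)) (p * entropy2 (q / p, 1 - q / p))"
proof (rule growth_rate_ge_mono)
  have "1 - p = q"
    using pq by simp
  then have "(\<lambda>N. real (N - n N) / real N) \<longlonglongrightarrow> q"
    using tendsto_complement_div[OF n_le n_ratio] by simp
  then show "growth_rate_ge (\<lambda>N. real (n N choose (N - n N))) (p * entropy2 (q / p, 1 - q / p))"
    using n_ratio q by (intro growth_rate_ge_binomial) auto
  show "\<forall>\<^sub>F N in sequentially. real (n N choose (N - n N)) \<le> coeff_Fib (n N, N - n N)"
    by (simp add: coeff_Fib_eq binomial_right_mono)
qed

lemma psi_Fib_gt_half:
  fixes p :: real
  assumes p: "1 / 2 < p" "p < 1"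
  defines "q \<equiv> 1 - p"
  shows "psi_Fib (p, q) = ereal (p * ln (p / (p - q)) + q * ln ((p - q) / q))"
proof -
  define L where "L = p * ln (p / (p - q)) + q * ln ((p - q) / q)"
  define n where "n N = nat \<lfloor>p * real N\<rfloor>" for N
  have q: "0 < q" "q < p" "p + q = 1"
    using p by (auto simp: q_def)
  have n_le: "n N \<le> N" for N
    using p by (simp add: n_def nat_floor_mult_le)
  have n_ratio: "(\<lambda>N. real (n N) / real N) \<longlonglongrightarrow> p"
    using p unfolding n_def by (intro tendsto_nat_floor_mult_div) simp
  have "1 - q / p = (p - q) / p"
    using q by (simp add: field_simps)
  then have "p * entropy2 (q / p, 1 - q / p) = L"
    using q by (simp add: L_def entropy2_def ln_div field_simps)
  with growth_rate_ge_coeff_Fib[OF n_le n_ratio q(3) q(1,2)]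
  have growth: "growth_rate_ge (\<lambda>N. coeff_Fib (n N, N - n N)) L"
    by simp
  show ?thesis
    unfolding psi_Fib_def L_def[symmetric]
  proof (rule indicatrice_eqI[OF _ coeff_Fib_nonneg n_le n_ratio growth])
    show "(p, q) \<in> M2"
      using q by (simp add: M2_def)
    fix e :: real assume "0 < e"
    define x where "x = (p - q) / p"
    define y where "y = q / (p - q)"
    have "1 + y = p / (p - q)"
      using q by (simp add: y_def field_simps)
    then have "0 < x" "0 < y" "x * (1 + y) = 1"
      using q by (simp_all add: x_def y_def)
    moreover have "- p * ln x - q * ln y = L"
      using q by (simp add: x_def y_def L_def ln_div algebra_simps)
    ultimately show "\<exists>x y. 0 < x \<and> 0 < y \<and> bounded_terms coeff_Fib x y \<and> - p * ln x - q * ln y < L + e"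
      using \<open>0 < e\<close> by (intro exI[of _ x] exI[of _ y]) (simp add: bounded_terms_coeff_Fib)
  qed
qed

lemma psi_Fib_half: "psi_Fib (1 / 2, 1 / 2) = 0"
proof -
  define n where "n N = nat \<lfloor>1 / 2 * real N\<rfloor>" for N
  have n_le: "n N \<le> N" for N
    unfolding n_def by (rule nat_floor_mult_le) simp_all
  have n_ratio: "(\<lambda>N. real (n N) / real N) \<longlonglongrightarrow> 1 / 2"
    unfolding n_def by (intro tendsto_nat_floor_mult_div) simp
  have "1 \<le> coeff_Fib (n N, N - n N)" for N
  proof -
    have "N - n N \<le> Suc (n N)"
      unfolding n_def by linarith
    then show ?thesis
      by (simp add: coeff_Fib_eq Suc_le_eq)
  qed
  then have growth: "growth_rate_ge (\<lambda>N. coeff_Fib (n N, N - n N)) 0"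
    by (intro growth_rate_ge_zero always_eventually) simp
  show ?thesis
    unfolding psi_Fib_def zero_ereal_def
  proof (rule indicatrice_eqI[OF _ coeff_Fib_nonneg n_le n_ratio growth])
    show "(1 / 2, 1 / 2) \<in> M2"
      by (simp add: M2_def)
    fix e :: real assume e: "0 < e"
    define y where "y = 1 / e"
    define x where "x = 1 / (1 + y)"
    have y: "0 < y"
      using e by (simp add: y_def)
    then have "0 < x" "x * (1 + y) \<le> 1"
      by (simp_all add: x_def)
    moreover have "- (1 / 2) * ln x - 1 / 2 * ln y = 1 / 2 * ln (1 + 1 / y)"
      using y by (simp add: x_def ln_div field_simps)
    moreover have "ln (1 + 1 / y) \<le> 1 / y"
      using y by (intro ln_add_one_self_le_self) simp
    ultimately show "\<exists>x y. 0 < x \<and> 0 < y \<and> bounded_terms coeff_Fib x y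
        \<and> - (1 / 2) * ln x - 1 / 2 * ln y < 0 + e"
      using y e bounded_terms_coeff_Fib by (intro exI[of _ x] exI[of _ y]) (auto simp: y_def)
  qed
qed

lemma psi_Fib_lt_half:
  fixes p :: real
  assumes p: "0 < p" "p < 1 / 2"
  shows "psi_Fib (p, 1 - p) = -\<infinity>"
  unfolding psi_Fib_def
proof (rule indicatrice_eq_minf)
  define d where "d = 1 / 2 - p"
  have d: "0 < d"
    using p by (simp add: d_def)
  define C where "C = {z. (1 + d) * fst z + (d - 1) * snd z < (0::real)}"
  show "(p, 1 - p) \<in> M2"
    using p by (simp add: M2_def)
  show "open_cone C"
    unfolding C_def by (rule open_cone_halfplane)
  show "(p, 1 - p) \<in> C"
    using p by (simp add: C_def d_def algebra_simps)
  show "\<forall>\<^sub>F R in at_top. \<forall>i\<in>shell C R. coeff_Fib i = 0"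
  proof (intro eventually_mono[OF eventually_ge_at_top[of "2 / d"]] ballI)
    fix R i assume R: "2 / d \<le> R" and i: "i \<in> shell C R"
    obtain n m where nm: "i = (n, m)"
      by force
    have "(1 + d) * n + (d - 1) * m < 0" and "R \<le> real n + real m"
      using i by (auto simp: nm shell_def C_def)
    then have "d * (real n + real m) < real m - real n" and "d * R \<le> d * (real n + real m)"
      using d by (simp add: algebra_simps) (simp add: \<open>R \<le> real n + real m\<close> d)
    moreover have "2 \<le> d * R"
      using R d by (simp add: field_simps)
    ultimately have "Suc n < m"
      by linarith
    then show "coeff_Fib i = 0"
      by (simp add: nm coeff_Fib_eq)
  qed
qed

section \<open>Freely reduced words in the free group of rank two\<close>

definition letter_inv :: "letter \<Rightarrow> letter" where
  "letter_inv x = (fst x, \<not> snd x)"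

lemma UNIV_letter: "(UNIV :: letter set) = {(A, True), (A, False), (B, True), (B, False)}"
  by (auto simp: UNIV_gen)

lemma freely_reduced_Nil [simp]: "freely_reduced []"
  by (simp add: freely_reduced_def)

lemma freely_reduced_Cons:
  "freely_reduced (x # w) \<longleftrightarrow> freely_reduced w \<and> (w = [] \<or> hd w \<noteq> letter_inv x)"
proof -
  have inv: "(fst x = fst y \<and> snd x \<noteq> snd y) \<longleftrightarrow> y = letter_inv x" for x y :: letter
    by (cases x; cases y) (auto simp: letter_inv_def)
  have "freely_reduced (x # w) \<longleftrightarrow>
      freely_reduced w \<and> (w \<noteq> [] \<longrightarrow> \<not> (fst x = fst (hd w) \<and> snd x \<noteq> snd (hd w)))"
    unfolding freely_reduced_def
    by (cases w) (auto simp: All_less_Suc2 nth_Cons' split: nat.splits)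
  then show ?thesis
    using inv[of x "hd w"] by blast
qed

lemma freely_reduced_if_same_sign:
  assumes "\<And>x. x \<in> set w \<Longrightarrow> snd x = s"
  shows "freely_reduced w"
  using assms unfolding freely_reduced_def by (metis Suc_lessD nth_mem)

lemma occ_simps [simp]:
  "occ g [] = 0"
  "occ g (x # w) = (if fst x = g then Suc (occ g w) else occ g w)"
  by (simp_all add: occ_def)

lemma length_eq_occ: "length w = occ A w + occ B w"
  by (induction w) auto

definition reduced_words :: "nat \<Rightarrow> nat \<Rightarrow> letter list set" where
  "reduced_words n m = {w. freely_reduced w \<and> occ A w = n \<and> occ B w = m}"

definition reduced_words_hd :: "letter \<Rightarrow> nat \<Rightarrow> nat \<Rightarrow> letter list set" where
  "reduced_words_hd x n m = {w \<in> reduced_words n m. w \<noteq> [] \<and> hd w = x}"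

lemma coeff_F2_eq: "coeff_F2 (n, m) = real (card (reduced_words n m))"
  by (simp add: coeff_F2_def reduced_words_def)

lemma finite_reduced_words: "finite (reduced_words n m)"
proof (rule finite_subset)
  show "reduced_words n m \<subseteq> {w. set w \<subseteq> UNIV \<and> length w = n + m}"
    by (auto simp: reduced_words_def length_eq_occ)
  show "finite {w. set w \<subseteq> (UNIV :: letter set) \<and> length w = n + m}"
    by (rule finite_lists_length_eq) (simp add: UNIV_letter)
qed

lemma finite_reduced_words_hd: "finite (reduced_words_hd x n m)"
  using finite_reduced_words by (rule finite_subset[rotated]) (auto simp: reduced_words_hd_def)

lemma card_reduced_words:
  "card (reduced_words n m) = of_bool (n = 0 \<and> m = 0)
     + card (reduced_words_hd (A, True) n m) + card (reduced_words_hd (A, False) n m)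
     + card (reduced_words_hd (B, True) n m) + card (reduced_words_hd (B, False) n m)"
proof -
  let ?E = "if n = 0 \<and> m = 0 then {[] :: letter list} else {}"
  have decomp: "reduced_words n m = ?E \<union> (\<Union>x. reduced_words_hd x n m)"
    by (auto simp: reduced_words_def reduced_words_hd_def)
  have disjoint: "?E \<inter> (\<Union>x. reduced_words_hd x n m) = {}"
    by (auto simp: reduced_words_hd_def)
  have finite_Union_hd: "finite (\<Union>x. reduced_words_hd x n m)"
    by (intro finite_UN_I) (simp_all add: UNIV_letter finite_reduced_words_hd)
  have card_decomp: "card (reduced_words n m) = card ?E + card (\<Union>x. reduced_words_hd x n m)"
    unfolding decomp by (rule card_Un_disjoint) (simp_all add: disjoint finite_Union_hd)
  have "reduced_words_hd x n m \<inter> reduced_words_hd y n m = {}" if "x \<noteq> y" for x y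
    using that by (auto simp: reduced_words_hd_def)
  then have "card (\<Union>x. reduced_words_hd x n m) = (\<Sum>x\<in>UNIV. card (reduced_words_hd x n m))"
    by (intro card_UN_disjoint) (simp_all add: UNIV_letter finite_reduced_words_hd)
  with card_decomp show ?thesis
    by (simp add: UNIV_letter)
qed

lemma reduced_words_hd_Cons:
  "reduced_words_hd x (n + of_bool (fst x = A)) (m + of_bool (fst x = B))
     = Cons x ` (reduced_words n m - reduced_words_hd (letter_inv x) n m)"
proof -
  have "w \<in> reduced_words_hd x (n + of_bool (fst x = A)) (m + of_bool (fst x = B)) \<longleftrightarrow>
      (\<exists>w'. w = x # w' \<and> w' \<in> reduced_words n m - reduced_words_hd (letter_inv x) n m)" for w
    by (cases w) (auto simp: reduced_words_hd_def reduced_words_def freely_reduced_Cons)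
  then show ?thesis
    by auto
qed

lemma card_reduced_words_hd_Cons:
  "card (reduced_words_hd x (n + of_bool (fst x = A)) (m + of_bool (fst x = B)))
     + card (reduced_words_hd (letter_inv x) n m) = card (reduced_words n m)"
proof -
  have "reduced_words_hd (letter_inv x) n m \<subseteq> reduced_words n m"
    by (auto simp: reduced_words_hd_def)
  then show ?thesis
    unfolding reduced_words_hd_Cons
    using card_mono[OF finite_reduced_words]
    by (simp add: card_image card_Diff_subset finite_reduced_words_hd)
qed

lemma card_reduced_words_hd_A:
  "card (reduced_words_hd (A, s) (Suc n) m) = of_bool (n = 0 \<and> m = 0)
     + card (reduced_words_hd (A, s) n m)
     + card (reduced_words_hd (B, True) n m) + card (reduced_words_hd (B, False) n m)"
  using card_reduced_words_hd_Cons[of "(A, s)" n m] card_reduced_words[of n m]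
  by (cases s) (simp_all add: letter_inv_def)

lemma card_reduced_words_hd_B:
  "card (reduced_words_hd (B, s) n (Suc m)) = of_bool (n = 0 \<and> m = 0)
     + card (reduced_words_hd (B, s) n m)
     + card (reduced_words_hd (A, True) n m) + card (reduced_words_hd (A, False) n m)"
  using card_reduced_words_hd_Cons[of "(B, s)" n m] card_reduced_words[of n m]
  by (cases s) (simp_all add: letter_inv_def)

lemma reduced_words_hd_A_0 [simp]: "reduced_words_hd (A, s) 0 m = {}"
  by (auto simp: reduced_words_hd_def reduced_words_def neq_Nil_conv)

lemma reduced_words_hd_B_0 [simp]: "reduced_words_hd (B, s) n 0 = {}"
  by (auto simp: reduced_words_hd_def reduced_words_def neq_Nil_conv)

lemma card_reduced_words_hd_B_ge_1: "1 \<le> card (reduced_words_hd (B, s) 0 (Suc m))"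
proof -
  have "replicate (Suc m) (B, s) \<in> reduced_words_hd (B, s) 0 (Suc m)"
    by (auto simp: reduced_words_hd_def reduced_words_def occ_def
        intro: freely_reduced_if_same_sign[of _ s])
  then show ?thesis
    using finite_reduced_words_hd by (metis card_0_eq empty_iff less_one not_le)
qed

lemma coeff_F2_ge_1: "1 \<le> coeff_F2 (n, m)"
proof -
  have "replicate n (A, False) @ replicate m (B, False) \<in> reduced_words n m"
    by (auto simp: reduced_words_def occ_def intro: freely_reduced_if_same_sign[of _ False])
  then have "reduced_words n m \<noteq> {}"
    by blast
  then show ?thesis
    using finite_reduced_words by (simp add: coeff_F2_eq Suc_le_eq card_gt_0_iff)
qed

lemma card_reduced_words_hd_weight_le:
  fixes x y cA cB :: real
  assumes x: "0 < x" and y: "0 < y" and cA: "0 \<le> cA" and cB: "0 \<le> cB"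
    and fixA: "x * (1 + cA + 2 * cB) \<le> cA" and fixB: "y * (1 + cB + 2 * cA) \<le> cB"
  shows "card (reduced_words_hd (A, s) n m) * x ^ n * y ^ m \<le> cA
    \<and> card (reduced_words_hd (B, s) n m) * x ^ n * y ^ m \<le> cB"
proof (induction "n + m" arbitrary: n m s rule: less_induct)
  case less
  have of_bool_le: "of_bool (n = 0 \<and> m = 0) * x ^ n * y ^ m \<le> (1::real)" for n m
    by simp
  have A: "card (reduced_words_hd (A, s) n m) * x ^ n * y ^ m \<le> cA"
  proof (cases n)
    case (Suc n')
    then have IH: "card (reduced_words_hd (A, s) n' m) * x ^ n' * y ^ m \<le> cA"
      "card (reduced_words_hd (B, t) n' m) * x ^ n' * y ^ m \<le> cB" for t
      using less[where n = n' and m = m and s = s] less[where n = n' and m = m and s = t] by auto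
    have "card (reduced_words_hd (A, s) n m) * x ^ n * y ^ m
        = x * (of_bool (n' = 0 \<and> m = 0) * x ^ n' * y ^ m
          + card (reduced_words_hd (A, s) n' m) * x ^ n' * y ^ m
          + card (reduced_words_hd (B, True) n' m) * x ^ n' * y ^ m
          + card (reduced_words_hd (B, False) n' m) * x ^ n' * y ^ m)"
      unfolding Suc card_reduced_words_hd_A by (simp add: algebra_simps)
    also have "\<dots> \<le> x * (1 + cA + 2 * cB)"
      using IH(1) IH(2)[of True] IH(2)[of False] of_bool_le x by (intro mult_left_mono) auto
    finally show ?thesis
      using fixA by linarith
  qed (use cA in simp)
  have B: "card (reduced_words_hd (B, s) n m) * x ^ n * y ^ m \<le> cB"
  proof (cases m)
    case (Suc m')
    then have IH: "card (reduced_words_hd (B, s) n m') * x ^ n * y ^ m' \<le> cB"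
      "card (reduced_words_hd (A, t) n m') * x ^ n * y ^ m' \<le> cA" for t
      using less[where n = n and m = m' and s = s] less[where n = n and m = m' and s = t] by auto
    have "card (reduced_words_hd (B, s) n m) * x ^ n * y ^ m
        = y * (of_bool (n = 0 \<and> m' = 0) * x ^ n * y ^ m'
          + card (reduced_words_hd (B, s) n m') * x ^ n * y ^ m'
          + card (reduced_words_hd (A, True) n m') * x ^ n * y ^ m'
          + card (reduced_words_hd (A, False) n m') * x ^ n * y ^ m')"
      unfolding Suc card_reduced_words_hd_B by (simp add: algebra_simps)
    also have "\<dots> \<le> y * (1 + cB + 2 * cA)"
      using IH(1) IH(2)[of True] IH(2)[of False] of_bool_le y by (intro mult_left_mono) auto
    finally show ?thesis
      using fixB by linarith
  qed (use cB in simp)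
  from A B show ?case ..
qed

lemma bounded_terms_coeff_F2:
  fixes x y :: real
  assumes x: "0 < x" and y: "0 < y" and xy: "x + y + 3 * x * y < 1"
  shows "bounded_terms coeff_F2 x y"
proof -
  \<comment> \<open>\<open>cA\<close> and \<open>cB\<close> are the sums of \<open>x ^ n * y ^ m\<close> over the reduced words beginning with a
    fixed \<open>a\<close>-letter, resp. \<open>b\<close>-letter; they solve the linear system behind the recursion.\<close>
  define D where "D = 1 - x - y - 3 * x * y"
  define cA where "cA = x * (1 + y) / D"
  define cB where "cB = y * (1 + x) / D"
  have D: "0 < D"
    using xy by (simp add: D_def)
  have "1 + cA + 2 * cB = (D + x * (1 + y) + 2 * (y * (1 + x))) / D"
    "1 + cB + 2 * cA = (D + y * (1 + x) + 2 * (x * (1 + y))) / D"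
    using D by (simp_all add: cA_def cB_def field_simps)
  moreover have "D + x * (1 + y) + 2 * (y * (1 + x)) = 1 + y"
    "D + y * (1 + x) + 2 * (x * (1 + y)) = 1 + x"
    by (simp_all add: D_def algebra_simps)
  ultimately have "x * (1 + cA + 2 * cB) = cA" "y * (1 + cB + 2 * cA) = cB"
    by (simp_all add: cA_def cB_def)
  then have bound: "card (reduced_words_hd (A, s) n m) * x ^ n * y ^ m \<le> cA
      \<and> card (reduced_words_hd (B, s) n m) * x ^ n * y ^ m \<le> cB" for s n m
    using x y D by (intro card_reduced_words_hd_weight_le) (simp_all add: cA_def cB_def)
  have "coeff_F2 (n, m) * x ^ n * y ^ m \<le> 1 + 2 * cA + 2 * cB" for n m
  proof -
    have "coeff_F2 (n, m) * x ^ n * y ^ m = of_bool (n = 0 \<and> m = 0) * x ^ n * y ^ m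
        + card (reduced_words_hd (A, True) n m) * x ^ n * y ^ m
        + card (reduced_words_hd (A, False) n m) * x ^ n * y ^ m
        + card (reduced_words_hd (B, True) n m) * x ^ n * y ^ m
        + card (reduced_words_hd (B, False) n m) * x ^ n * y ^ m"
      unfolding coeff_F2_eq card_reduced_words by (simp add: algebra_simps)
    moreover have "of_bool (n = 0 \<and> m = 0) * x ^ n * y ^ m \<le> (1::real)"
      by simp
    ultimately show ?thesis
      using bound[of True n m] bound[of False n m] by linarith
  qed
  then show ?thesis
    unfolding bounded_terms_def by blast
qed

lemma card_reduced_words_hd_A_ge_binomial_step:
  assumes A: "\<And>i. 2 * 4 ^ i * (n choose i) * (m choose i) \<le> card (reduced_words_hd (A, s) (Suc n) (Suc m))"
    and B: "\<And>i t. 4 ^ Suc i * (n choose i) * (m choose Suc i) \<le> card (reduced_words_hd (B, t) (Suc n) (Suc m))"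
  shows "2 * 4 ^ j * (Suc n choose j) * (m choose j) \<le> card (reduced_words_hd (A, s) (Suc (Suc n)) (Suc m))"
proof -
  have rec: "card (reduced_words_hd (A, s) (Suc (Suc n)) (Suc m)) = card (reduced_words_hd (A, s) (Suc n) (Suc m))
      + card (reduced_words_hd (B, True) (Suc n) (Suc m)) + card (reduced_words_hd (B, False) (Suc n) (Suc m))"
    by (subst card_reduced_words_hd_A) simp
  show ?thesis
  proof (cases j)
    case 0
    then show ?thesis
      using A[of 0] rec by simp
  next
    case (Suc i)
    have split: "2 * a * (b + c) * d = 2 * a * c * d + a * b * d + a * b * d" for a b c d :: nat
      by (simp add: algebra_simps)
    have "2 * 4 ^ j * (Suc n choose j) * (m choose j)
        = 2 * 4 ^ j * (n choose j) * (m choose j)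
          + 4 ^ Suc i * (n choose i) * (m choose Suc i) + 4 ^ Suc i * (n choose i) * (m choose Suc i)"
      unfolding Suc by (simp only: binomial_Suc_Suc split)
    also have "\<dots> \<le> card (reduced_words_hd (A, s) (Suc (Suc n)) (Suc m))"
      unfolding rec using A[of j] B[of i True] B[of i False] by linarith
    finally show ?thesis .
  qed
qed

lemma card_reduced_words_hd_B_ge_binomial_step:
  assumes A: "\<And>t. 2 * 4 ^ j * (n choose j) * (m choose j) \<le> card (reduced_words_hd (A, t) (Suc n) (Suc m))"
    and B: "4 ^ Suc j * (n choose j) * (m choose Suc j) \<le> card (reduced_words_hd (B, s) (Suc n) (Suc m))"
  shows "4 ^ Suc j * (n choose j) * (Suc m choose Suc j) \<le> card (reduced_words_hd (B, s) (Suc n) (Suc (Suc m)))"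
proof -
  have split: "4 * a * b * (c + d) = 4 * a * b * d + 2 * a * b * c + 2 * a * b * c" for a b c d :: nat
    by (simp add: algebra_simps)
  have "4 ^ Suc j * (n choose j) * (Suc m choose Suc j)
      = 4 ^ Suc j * (n choose j) * (m choose Suc j)
        + 2 * 4 ^ j * (n choose j) * (m choose j) + 2 * 4 ^ j * (n choose j) * (m choose j)"
    by (simp only: power_Suc binomial_Suc_Suc split)
  also have "\<dots> \<le> card (reduced_words_hd (B, s) (Suc n) (Suc (Suc m)))"
    unfolding card_reduced_words_hd_B[of s "Suc n" "Suc m"]
    using A[of True] A[of False] B by linarith
  finally show ?thesis .
qed

text \<open>Both bounds count the words with the given first letter that end with a \<open>b\<close>-letter and
  have exactly \<open>j + 1\<close> maximal blocks of \<open>a\<close>-letters; every block but the first has a free sign.\<close>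

lemma card_reduced_words_hd_ge_binomial:
  "2 * 4 ^ j * (n choose j) * (m choose j) \<le> card (reduced_words_hd (A, s) (Suc n) (Suc m))
   \<and> 4 ^ Suc j * (n choose j) * (m choose Suc j) \<le> card (reduced_words_hd (B, s) (Suc n) (Suc m))"
proof (induction "n + m" arbitrary: n m j s rule: less_induct)
  case less
  have A: "2 * 4 ^ j * (n choose j) * (m choose j) \<le> card (reduced_words_hd (A, s) (Suc n) (Suc m))"
  proof (cases n)
    case 0
    have "2 \<le> card (reduced_words_hd (A, s) (Suc 0) (Suc m))"
      using card_reduced_words_hd_B_ge_1[of True m] card_reduced_words_hd_B_ge_1[of False m]
      by (simp add: card_reduced_words_hd_A)
    with 0 show ?thesis
      by (cases j) auto
  next
    case (Suc n')
    then have "n' + m < n + m"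
      by simp
    with less show ?thesis
      unfolding Suc by (intro card_reduced_words_hd_A_ge_binomial_step) blast+
  qed
  have B: "4 ^ Suc j * (n choose j) * (m choose Suc j) \<le> card (reduced_words_hd (B, s) (Suc n) (Suc m))"
  proof (cases m)
    case (Suc m')
    then have "n + m' < n + m"
      by simp
    with less show ?thesis
      unfolding Suc by (intro card_reduced_words_hd_B_ge_binomial_step) blast+
  qed simp
  from A B show ?case ..
qed

lemma coeff_F2_ge_binomial: "4 ^ j * real (n choose j) * real (m choose j) \<le> coeff_F2 (Suc n, Suc m)"
proof -
  have "4 ^ j * (n choose j) * (m choose j) \<le> 2 * 4 ^ j * (n choose j) * (m choose j)"
    by simp
  also have "\<dots> \<le> card (reduced_words_hd (A, True) (Suc n) (Suc m))"
    using card_reduced_words_hd_ge_binomial by blast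
  also have "\<dots> \<le> card (reduced_words (Suc n) (Suc m))"
    by (simp add: card_reduced_words)
  finally have "real (4 ^ j * (n choose j) * (m choose j)) \<le> real (card (reduced_words (Suc n) (Suc m)))"
    by (simp only: of_nat_le_iff)
  then show ?thesis
    by (simp add: coeff_F2_eq)
qed

lemma coeff_F2_nonneg: "0 \<le> coeff_F2 i"
  by (simp add: coeff_F2_def)

lemma growth_rate_ge_coeff_F2:
  fixes p q t :: real
  assumes n_le: "\<And>N. n N \<le> N" and n_ratio: "(\<lambda>N. real (n N) / real N) \<longlonglongrightarrow> p"
    and pq: "p + q = 1" and t: "0 < t" "t < p" "t < q"
  shows "growth_rate_ge (\<lambda>N. coeff_F2 (n N, N - n N))
    (t * ln 4 + p * entropy2 (t / p, 1 - t / p) + q * entropy2 (t / q, 1 - t / q))"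
proof -
  define k where "k N = nat \<lfloor>t * real N\<rfloor>" for N
  have k_ratio: "(\<lambda>N. real (k N) / real N) \<longlonglongrightarrow> t"
    unfolding k_def using t by (intro tendsto_nat_floor_mult_div) simp
  have "1 - p = q"
    using pq by simp
  then have m_ratio: "(\<lambda>N. real (N - n N) / real N) \<longlonglongrightarrow> q"
    using tendsto_complement_div[OF n_le n_ratio] by simp
  have "growth_rate_ge (\<lambda>N. 4 ^ k N * real (n N - 1 choose k N) * real (N - n N - 1 choose k N))
      (t * ln 4 + p * entropy2 (t / p, 1 - t / p) + q * entropy2 (t / q, 1 - t / q))"
    using t
    by (intro growth_rate_ge_mult growth_rate_ge_power growth_rate_ge_binomial tendsto_pred_div
        k_ratio n_ratio m_ratio) simp_all
  moreover have "\<forall>\<^sub>F N in sequentially.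
      4 ^ k N * real (n N - 1 choose k N) * real (N - n N - 1 choose k N) \<le> coeff_F2 (n N, N - n N)"
  proof -
    have "\<forall>\<^sub>F N in sequentially. 0 < real (n N) / real N"
      using order_tendstoD(1)[OF n_ratio, of 0] t by simp
    moreover have "\<forall>\<^sub>F N in sequentially. 0 < real (N - n N) / real N"
      using order_tendstoD(1)[OF m_ratio, of 0] t by simp
    ultimately show ?thesis
    proof eventually_elim
      case (elim N)
      then have "n N = Suc (n N - 1)" "N - n N = Suc (N - n N - 1)"
        by (auto simp: zero_less_divide_iff)
      then show ?case
        by (metis coeff_F2_ge_binomial)
    qed
  qed
  ultimately show ?thesis
    by (rule growth_rate_ge_mono)
qed

text \<open>\<open>(x, y)\<close> is the point of the curve \<open>x + y + 3 x y = 1\<close>, on which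
  \<open>\<Delta>\<^sub>F\<^sub>2 = (1 + x) (1 + y) / (1 - x - y - 3 x y)\<close> becomes singular, where \<open>- p ln x - q ln y\<close>
  is minimal.\<close>

lemma F2_critical_point:
  fixes p q :: real
  assumes p: "0 < p" and q: "0 < q"
  defines "s \<equiv> sqrt (p\<^sup>2 - p * q + q\<^sup>2)"
  defines "x \<equiv> p / (2 * q - p + 2 * s)" and "y \<equiv> q / (2 * p - q + 2 * s)"
  shows "0 < x" "x < 1" "0 < y" "y < 1" "(1 - x) * (1 - y) = 4 * x * y" "p * (1 - x) = q * (1 - y)"
    and "entropy2 (p, q) + p * ln (2 * q - p + 2 * s) + q * ln (2 * p - q + 2 * s) = - p * ln x - q * ln y"
proof -
  define u where "u = 2 * q - p + 2 * s"
  define v where "v = 2 * p - q + 2 * s"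
  have disc: "p\<^sup>2 - p * q + q\<^sup>2 = (p - q)\<^sup>2 + p * q"
    by (simp add: power2_eq_square algebra_simps)
  also have "\<dots> \<ge> 0"
    using p q by simp
  finally have s2: "s\<^sup>2 = (p - q)\<^sup>2 + p * q" and "0 \<le> s"
    by (simp_all add: s_def disc)
  have "\<bar>p - q\<bar>\<^sup>2 < s\<^sup>2"
    using s2 p q by simp
  then have "\<bar>p - q\<bar> < s"
    using \<open>0 \<le> s\<close> by (rule power_less_imp_less_base)
  then have up: "0 < u - p" and vq: "0 < v - q"
    by (auto simp: u_def v_def)
  then have u: "0 < u" and v: "0 < v"
    using p q by auto
  have x_eq: "x = p / u" and y_eq: "y = q / v"
    by (simp_all add: x_def y_def u_def v_def)
  have "(u - p) * (v - q) = 4 * (s\<^sup>2 - (p - q)\<^sup>2)"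
    by (simp add: u_def v_def power2_eq_square algebra_simps)
  then have prod: "(u - p) * (v - q) = 4 * p * q"
    using s2 by simp
  have "p * (u - p) * v - q * (v - q) * u = 2 * (q - p) * (2 * ((p - q)\<^sup>2 + p * q) - 2 * s\<^sup>2)"
    by (simp add: u_def v_def power2_eq_square algebra_simps)
  then have balance: "p * (u - p) * v = q * (v - q) * u"
    using s2 by simp
  show "0 < x" "x < 1" "0 < y" "y < 1"
    using p q up vq u v by (simp_all add: x_eq y_eq)
  show "entropy2 (p, q) + p * ln (2 * q - p + 2 * s) + q * ln (2 * p - q + 2 * s) = - p * ln x - q * ln y"
    using p q u v unfolding u_def[symmetric] v_def[symmetric] x_eq y_eq
    by (simp add: entropy2_def ln_div algebra_simps)
  show "(1 - x) * (1 - y) = 4 * x * y"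
    using prod u v by (simp add: x_eq y_eq field_simps)
  show "p * (1 - x) = q * (1 - y)"
    using balance u v by (simp add: x_eq y_eq field_simps)
qed

lemma F2_rate_at_critical_point:
  fixes p q x y :: real
  assumes p: "0 < p" and q: "0 < q" and x: "0 < x" "x < 1" and y: "0 < y" "y < 1"
    and curve: "(1 - x) * (1 - y) = 4 * x * y" and balance: "p * (1 - x) = q * (1 - y)"
  defines "t \<equiv> p * (1 - x)"
  shows "t * ln 4 + p * entropy2 (t / p, 1 - t / p) + q * entropy2 (t / q, 1 - t / q)
    = - p * ln x - q * ln y"
proof -
  have t_q: "t = q * (1 - y)"
    by (simp add: t_def balance)
  have "ln 4 + ln x + ln y = ln (4 * x * y)"
    using x y by (simp add: ln_mult)
  also have "\<dots> = ln (1 - x) + ln (1 - y)"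
    using x y by (simp flip: curve add: ln_mult)
  finally have "t * ln 4 + t * ln x + t * ln y = t * ln (1 - x) + t * ln (1 - y)"
    by (metis distrib_left)
  moreover have ratios: "t / p = 1 - x" "t / q = 1 - y"
    using p q by (simp add: t_def, simp add: t_q)
  have "p * entropy2 (t / p, 1 - t / p) = - t * ln (1 - x) - (p - t) * ln x"
    by (simp only: ratios) (simp add: entropy2_def t_def algebra_simps)
  moreover have "q * entropy2 (t / q, 1 - t / q) = - t * ln (1 - y) - (q - t) * ln y"
    by (simp only: ratios) (simp add: entropy2_def t_q algebra_simps)
  ultimately show ?thesis
    by (simp add: algebra_simps)
qed

lemma bounded_terms_coeff_F2_scaled:
  fixes x y r :: real
  assumes x: "0 < x" and y: "0 < y" and xy: "x + y + 3 * x * y \<le> 1" and r: "0 < r" "r < 1"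
  shows "bounded_terms coeff_F2 (r * x) (r * y)"
proof (rule bounded_terms_coeff_F2)
  have "r * r < 1 * 1"
    using r by (intro mult_strict_mono) auto
  then have "(r * r) * (x * y) < 1 * (x * y)"
    using x y by (intro mult_strict_right_mono) auto
  moreover have "r * x < x" "r * y < y"
    using r x y by simp_all
  ultimately show "r * x + r * y + 3 * (r * x) * (r * y) < 1"
    using xy by (simp add: algebra_simps)
qed (use x y r in auto)

lemma psi_F2_interior:
  fixes p q :: real
  assumes p: "0 < p" and q: "0 < q" and pq: "p + q = 1"
  shows "psi_F2 (p, q) = ereal (entropy2 (p, q)
    + p * ln (2 * q - p + 2 * sqrt (p\<^sup>2 - p * q + q\<^sup>2))
    + q * ln (2 * p - q + 2 * sqrt (p\<^sup>2 - p * q + q\<^sup>2)))"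
proof -
  define s where "s = sqrt (p\<^sup>2 - p * q + q\<^sup>2)"
  define x where "x = p / (2 * q - p + 2 * s)"
  define y where "y = q / (2 * p - q + 2 * s)"
  note crit = F2_critical_point[OF p q, folded s_def, folded x_def y_def]
  define L where "L = - p * ln x - q * ln y"
  define n where "n N = nat \<lfloor>p * real N\<rfloor>" for N
  have n_le: "n N \<le> N" for N
    unfolding n_def using p q pq by (intro nat_floor_mult_le) auto
  have n_ratio: "(\<lambda>N. real (n N) / real N) \<longlonglongrightarrow> p"
    unfolding n_def using p by (intro tendsto_nat_floor_mult_div) simp
  \<comment> \<open>the density of blocks of each generator in the words counted by the lower bound\<close>
  define t where "t = p * (1 - x)"
  have "0 < p * x" "p * x < p" "0 < q * y"
    using crit p q by simp_all
  moreover have "t = p - p * x" "t = q - q * y"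
    using crit(6) by (simp_all add: t_def algebra_simps)
  ultimately have t: "0 < t" "t < p" "t < q"
    by linarith+
  have "growth_rate_ge (\<lambda>N. coeff_F2 (n N, N - n N))
      (t * ln 4 + p * entropy2 (t / p, 1 - t / p) + q * entropy2 (t / q, 1 - t / q))"
    by (rule growth_rate_ge_coeff_F2[OF n_le n_ratio pq t])
  moreover have "t * ln 4 + p * entropy2 (t / p, 1 - t / p) + q * entropy2 (t / q, 1 - t / q) = L"
    unfolding t_def L_def by (rule F2_rate_at_critical_point[OF p q crit(1-6)])
  ultimately have growth: "growth_rate_ge (\<lambda>N. coeff_F2 (n N, N - n N)) L"
    by simp
  show ?thesis
    unfolding psi_F2_def s_def[symmetric] crit(7) L_def[symmetric]
  proof (rule indicatrice_eqI[OF _ coeff_F2_nonneg n_le n_ratio growth])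
    show "(p, q) \<in> M2"
      using p q pq by (simp add: M2_def)
    fix e :: real assume e: "0 < e"
    define r where "r = exp (- e / 2)"
    have r: "0 < r" "r < 1"
      using e by (auto simp: r_def)
    have "x + y + 3 * x * y = 1"
      using crit(5) by (simp add: algebra_simps)
    then have "bounded_terms coeff_F2 (r * x) (r * y)"
      using crit r by (intro bounded_terms_coeff_F2_scaled) auto
    moreover have "- p * ln (r * x) - q * ln (r * y) = L + (p + q) * (e / 2)"
      using r crit by (simp add: L_def ln_mult r_def algebra_simps)
    ultimately show "\<exists>x y. 0 < x \<and> 0 < y \<and> bounded_terms coeff_F2 x y \<and> - p * ln x - q * ln y < L + e"
      using r crit pq e by (intro exI[of _ "r * x"] exI[of _ "r * y"]) auto
  qed
qed

lemma exists_point_below_F2_curve: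
  fixes e :: real
  assumes "0 < e"
  obtains x y where "0 < x" "0 < y" "x + y + 3 * x * y < 1" "- ln x < e"
proof
  define x where "x = exp (- e / 2)"
  define y where "y = (1 - x) / 8"
  have x: "0 < x" "x < 1"
    using assms by (auto simp: x_def)
  then show "0 < x" "0 < y"
    by (simp_all add: y_def)
  have "1 - (x + y + 3 * x * y) = (1 - x) * (7 - 3 * x) / 8"
    by (simp add: y_def field_simps)
  also have "\<dots> > 0"
    using x by simp
  finally show "x + y + 3 * x * y < 1"
    by simp
  show "- ln x < e"
    using assms by (simp add: x_def)
qed

lemma psi_F2_vertex:
  assumes M2: "(p, q) \<in> M2" and vertex: "p * q = 0"
  shows "psi_F2 (p, q) = 0"
proof -
  have pq: "0 \<le> p" "0 \<le> q" "p + q = 1"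
    using M2 by (auto simp: M2_def)
  define n where "n N = nat \<lfloor>p * real N\<rfloor>" for N
  have n_le: "n N \<le> N" for N
    unfolding n_def using pq by (intro nat_floor_mult_le) auto
  have n_ratio: "(\<lambda>N. real (n N) / real N) \<longlonglongrightarrow> p"
    unfolding n_def using pq by (intro tendsto_nat_floor_mult_div) simp
  have growth: "growth_rate_ge (\<lambda>N. coeff_F2 (n N, N - n N)) 0"
    by (intro growth_rate_ge_zero always_eventually allI coeff_F2_ge_1)
  show ?thesis
    unfolding psi_F2_def zero_ereal_def
  proof (rule indicatrice_eqI[OF M2 coeff_F2_nonneg n_le n_ratio growth])
    fix e :: real assume "0 < e"
    then obtain z w where zw: "0 < z" "0 < w" "z + w + 3 * z * w < 1" "- ln z < e"
      by (rule exists_point_below_F2_curve)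
    then have bounded: "bounded_terms coeff_F2 z w" "bounded_terms coeff_F2 w z"
      by (simp_all add: bounded_terms_coeff_F2 algebra_simps)
    consider "p = 1" "q = 0" | "p = 0" "q = 1"
      using pq vertex by fastforce
    then show "\<exists>x y. 0 < x \<and> 0 < y \<and> bounded_terms coeff_F2 x y \<and> - p * ln x - q * ln y < 0 + e"
    proof cases
      case 1
      then show ?thesis
        using zw bounded by (intro exI[of _ z] exI[of _ w]) simp
    next
      case 2
      then show ?thesis
        using zw bounded by (intro exI[of _ w] exI[of _ z]) simp
    qed
  qed
qed

lemma psi_F2_eq:
  assumes M2: "(p, q) \<in> M2"
  shows "psi_F2 (p, q) = ereal (entropy2 (p, q)
    + p * ln (2 * q - p + 2 * sqrt (p\<^sup>2 - p * q + q\<^sup>2))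
    + q * ln (2 * p - q + 2 * sqrt (p\<^sup>2 - p * q + q\<^sup>2)))"
proof (cases "p * q = 0")
  case True
  moreover have "0 \<le> p" "0 \<le> q" "p + q = 1"
    using M2 by (auto simp: M2_def)
  ultimately have "p = 0 \<and> q = 1 \<or> p = 1 \<and> q = 0"
    by auto
  then show ?thesis
    using psi_F2_vertex[OF M2 True] by (auto simp: entropy2_def)
next
  case False
  with M2 show ?thesis
    by (intro psi_F2_interior) (auto simp: M2_def)
qed

lemma psi_Fib_eq:
  fixes p :: real
  assumes "0 < p" "p < 1"
  defines "q \<equiv> 1 - p"
  shows "psi_Fib (p, q) =
    (if p \<ge> 1 / 2 then ereal (p * ln (p / (p - q)) + q * ln ((p - q) / q)) else -\<infinity>)"
proof -
  consider "1 / 2 < p" | "p = 1 / 2" | "p < 1 / 2"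
    by linarith
  then show ?thesis
  proof cases
    case 1
    with assms show ?thesis
      using psi_Fib_gt_half[of p] by simp
  next
    case 2
    \<comment> \<open>Here \<open>p - q = 0\<close>, so with \<open>ln 0 = 0\<close> the formula reads 0, which is the correct value.\<close>
    show ?thesis
      unfolding 2 q_def using psi_Fib_half by simp
  next
    case 3
    with assms show ?thesis
      using psi_Fib_lt_half[of p] by simp
  qed
qed

theorem theorem1:
  shows "(\<forall>p q. (p, q) \<in> M2 \<longrightarrow>
            psi_F2 (p, q) =
              ereal (entropy2 (p, q)
                     + p * ln (2 * q - p + 2 * sqrt (p\<^sup>2 - p * q + q\<^sup>2))
                     + q * ln (2 * p - q + 2 * sqrt (p\<^sup>2 - p * q + q\<^sup>2))))
       \<and> (\<forall>p::real. 0 < p \<and> p < 1 \<longrightarrow>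
            (let q = 1 - p in
              psi_Fib (p, q) =
                (if p \<ge> 1 / 2 then ereal (p * ln (p / (p - q)) + q * ln ((p - q) / q))
                 else -\<infinity>)))"
  using psi_F2_eq psi_Fib_eq by (simp add: Let_def)

end
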